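(* In the setting of the context, suppose $\mathbb{P}(q(\mathcal{X})<1)>0$, and let $B\ge2$ be an integer with $(B+1)\alpha\in\mathbb{N}$. Then $k_B-k_{B-1}=1$ and $k_{B+1}-k_B=0$, and consequently $\mathrm{Pow}(B-1)<\mathrm{Pow}(B)$ and $\mathrm{Pow}(B+1)<\mathrm{Pow}(B)$.
   Context: Let $\mathcal{X}$ be a random observed dataset taking values in a space on which a finite group $\mathcal{G}$ acts (write $\mathcal{X}^\pi$ for the action of $\pi\in\mathcal{G}$; the identity of $\mathcal{G}$ fixes every dataset), and let $T$ be a real-valued test statistic. Fix $\alpha\in(0,1)$. For an integer $B\ge1$, let $\pi_1,\dots,\pi_B$ be i.i.d. uniform on $\mathcal{G}$, independent of $\mathcal{X}$. The Monte Carlo permutation $p$-value is $p_B(\mathcal{X})=\bigl(1+\sum_{i=1}^B \mathbf{1}\{T(\mathcal{X}^{\pi_i})\ge T(\mathcal{X})\}\bigr)/(B+1)$, and the test rejects iff $p_B(\mathcal{X})\le\alpha$. Define $q(\mathcal{X})=\mathbb{P}(T(\mathcal{X}^\pi)\ge T(\mathcal{X})\mid \mathcal{X})$ for $\pi$ uniform on $\mathcal{G}$ independent of $\mathcal{X}$ (so $q(\mathcal{X})\in[1/|\mathcal{G}|,1]$), $R_B=\sum_{i=1}^B \mathbf{1}\{T(\mathcal{X}^{\pi_i})\ge T(\mathcal{X})\}$ (so $R_B\mid\mathcal{X}\sim\mathrm{Binomial}(B,q(\mathcal{X}))$), and the critical count $k_B=\lfloor (B+1)\alpha\rfloor-1$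 for integers $B\ge 0$. Then $\{p_B(\mathcal{X})\le\alpha\}=\{R_B\le k_B\}$. The conditional rejection probability is $\phi_B(\mathcal{X})=\mathbb{P}(R_B\le k_B\mid\mathcal{X})$ and the (unconditional) power is $\mathrm{Pow}(B)=\mathbb{E}[\phi_B(\mathcal{X})]=\mathbb{E}\bigl[\mathbb{P}(\mathrm{Binomial}(B,q(\mathcal{X}))\le k_B\mid\mathcal{X})\bigr]$, for $B\ge1$. *)

theory Defs
  imports "HOL-Probability.Probability" "HOL-Algebra.Group"
begin

definition exceed_prob :: "('g, 'b) monoid_scheme \<Rightarrow> ('g \<Rightarrow> 'x \<Rightarrow> 'x) \<Rightarrow> ('x \<Rightarrow> real) \<Rightarrow> 'x \<Rightarrow> real" where
  "exceed_prob G act T x =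
     measure_pmf.prob (pmf_of_set (carrier G)) {g. T (act g x) \<ge> T x}"

definition crit_count :: "real \<Rightarrow> nat \<Rightarrow> int" where
  "crit_count \<alpha> B = \<lfloor>(real B + 1) * \<alpha>\<rfloor> - 1"

definition cond_rej :: "real \<Rightarrow> nat \<Rightarrow> real \<Rightarrow> real" where
  "cond_rej \<alpha> B q = measure_pmf.prob (binomial_pmf B q) {j. int j \<le> crit_count \<alpha> B}"

definition mc_power :: "'w measure \<Rightarrow> ('g, 'b) monoid_scheme \<Rightarrow> ('g \<Rightarrow> 'x \<Rightarrow> 'x) \<Rightarrow> ('x \<Rightarrow> real)
    \<Rightarrow> ('w \<Rightarrow> 'x) \<Rightarrow> real \<Rightarrow> nat \<Rightarrow> real" where
  "mc_power M G act T X \<alpha> B = integral\<^sup>L M (\<lambda>\<omega>. cond_rej \<alpha> B (exceed_prob G act T (X \<omega>)))"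

end

theory Submission
  imports Defs
begin

text \<open>
  Write m = (B + 1) \<alpha>; then k_B = k_{B+1} = m - 1 and k_{B-1} = m - 2. For the binomial
  distribution function F n q k = P(Binomial(n, q) \<le> k), conditioning on the last trial gives
  F (n + 1) q k = F n q k - q b n q k  and  F (n + 1) q k = F n q (k - 1) + (1 - q) b n q k,
  where b n q k is the binomial point mass. Hence phi_B - phi_{B-1} and phi_B - phi_{B+1} are
  nonnegative, and positive wherever 0 < q < 1. The identity of the group always counts, so
  q > 0; thus both differences are positive on the event q < 1, which has positive probability.
\<close>

text \<open>Polynomials in q rather than values of binomial_pmf, which is only meaningful for 0 \<le> q \<le> 1.\<close>

definition binomial_term :: "nat \<Rightarrow> real \<Rightarrow> nat \<Rightarrow> real" where
  "binomial_term n q j = real (n choose j) * q ^ j * (1 - q) ^ (n - j)"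

definition binomial_cdf :: "nat \<Rightarrow> real \<Rightarrow> int \<Rightarrow> real" where
  "binomial_cdf n q k = (\<Sum>j | int j \<le> k. binomial_term n q j)"

lemma binomial_term_nonneg: "0 \<le> q \<Longrightarrow> q \<le> 1 \<Longrightarrow> 0 \<le> binomial_term n q j"
  unfolding binomial_term_def by simp

lemma binomial_term_pos: "0 < q \<Longrightarrow> q < 1 \<Longrightarrow> j \<le> n \<Longrightarrow> 0 < binomial_term n q j"
  unfolding binomial_term_def by simp

lemma binomial_term_Suc_0: "binomial_term (Suc n) q 0 = (1 - q) * binomial_term n q 0"
  by (simp add: binomial_term_def)

lemma binomial_term_Suc_Suc:
  "binomial_term (Suc n) q (Suc j) = (1 - q) * binomial_term n q (Suc j) + q * binomial_term n q j"
proof (cases "j < n")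
  case True
  then have "n - j = Suc (n - Suc j)" by simp
  with True show ?thesis
    by (simp add: binomial_term_def algebra_simps)
next
  case False
  then show ?thesis by (simp add: binomial_term_def algebra_simps)
qed

lemma binomial_cdf_int: "binomial_cdf n q (int k) = (\<Sum>j\<le>k. binomial_term n q j)"
  unfolding binomial_cdf_def by (rule sum.cong) auto

lemma binomial_cdf_neg: "k < 0 \<Longrightarrow> binomial_cdf n q k = 0"
  unfolding binomial_cdf_def by simp

lemma binomial_cdf_diff_one:
  "binomial_cdf n q (int k) = binomial_cdf n q (int k - 1) + binomial_term n q k"
proof (cases k)
  case 0
  then show ?thesis using binomial_cdf_int[of n q 0] by (simp add: binomial_cdf_neg)
next
  case (Suc k')
  then show ?thesis using binomial_cdf_int[of n q k] binomial_cdf_int[of n q k'] by simp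
qed

lemma binomial_cdf_Suc_trials:
  "binomial_cdf (Suc n) q (int k) = binomial_cdf n q (int k) - q * binomial_term n q k"
proof (induction k)
  case 0
  then show ?case
    using binomial_cdf_int[of _ q 0] by (simp add: binomial_term_Suc_0 algebra_simps)
next
  case (Suc k)
  then show ?case
    using binomial_cdf_diff_one[of "Suc n" q "Suc k"] binomial_cdf_diff_one[of n q "Suc k"]
    by (simp add: binomial_term_Suc_Suc algebra_simps)
qed

lemma binomial_cdf_Suc_trials_count:
  "binomial_cdf (Suc n) q (int k) = binomial_cdf n q (int k - 1) + (1 - q) * binomial_term n q k"
  using binomial_cdf_Suc_trials[of n q k] binomial_cdf_diff_one[of n q k] by (simp add: algebra_simps)

lemma prob_binomial_le:
  assumes "0 \<le> q" "q \<le> 1"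
  shows "measure_pmf.prob (binomial_pmf n q) {j. int j \<le> k} = binomial_cdf n q k"
proof -
  have "finite {j. int j \<le> k}"
    by (rule finite_subset[of _ "{..nat k}"]) auto
  then show ?thesis
    using assms by (simp add: measure_measure_pmf_finite binomial_cdf_def binomial_term_def)
qed

lemma binomial_cdf_bounds: "0 \<le> q \<Longrightarrow> q \<le> 1 \<Longrightarrow> binomial_cdf n q k \<in> {0..1}"
  using prob_binomial_le[of q n k, symmetric] by simp

lemma borel_measurable_binomial_cdf [measurable]:
  assumes [measurable]: "Q \<in> borel_measurable M"
  shows "(\<lambda>\<omega>. binomial_cdf n (Q \<omega>) k) \<in> borel_measurable M"
  unfolding binomial_cdf_def binomial_term_def by measurable

lemma (in finite_measure) integrable_binomial_cdf:
  assumes "Q \<in> borel_measurable M" "\<And>\<omega>. \<omega> \<in> space M \<Longrightarrow> Q \<omega> \<in> {0..1}"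
  shows "integrable M (\<lambda>\<omega>. binomial_cdf n (Q \<omega>) k)"
  using assms binomial_cdf_bounds by (intro integrable_const_bound[where B=1]) auto

lemma (in finite_measure) integral_binomial_cdf_less:
  assumes Q: "Q \<in> borel_measurable M" "\<And>\<omega>. \<omega> \<in> space M \<Longrightarrow> Q \<omega> \<in> {0<..1}"
    and nondegenerate: "emeasure M {\<omega> \<in> space M. Q \<omega> < 1} \<noteq> 0"
    and le: "\<And>q. q \<in> {0<..1} \<Longrightarrow> binomial_cdf n q k \<le> binomial_cdf n' q k'"
    and less: "\<And>q. q \<in> {0<..<1} \<Longrightarrow> binomial_cdf n q k < binomial_cdf n' q k'"
  shows "(\<integral>\<omega>. binomial_cdf n (Q \<omega>) k \<partial>M) < (\<integral>\<omega>. binomial_cdf n' (Q \<omega>) k' \<partial>M)"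
proof (rule integral_less_AE[OF _ _ nondegenerate])
  show "integrable M (\<lambda>\<omega>. binomial_cdf n (Q \<omega>) k)" "integrable M (\<lambda>\<omega>. binomial_cdf n' (Q \<omega>) k')"
    using Q by (force intro!: integrable_binomial_cdf)+
  show "{\<omega> \<in> space M. Q \<omega> < 1} \<in> sets M"
    using Q(1) by measurable
  show "AE \<omega> in M. \<omega> \<in> {\<omega> \<in> space M. Q \<omega> < 1}
      \<longrightarrow> binomial_cdf n (Q \<omega>) k \<noteq> binomial_cdf n' (Q \<omega>) k'"
    using Q(2) by (intro AE_I2) (auto intro!: less_imp_neq less)
  show "AE \<omega> in M. binomial_cdf n (Q \<omega>) k \<le> binomial_cdf n' (Q \<omega>) k'"
    using Q(2) le by (intro AE_I2) auto
qed

lemma cond_rej_eq_binomial_cdf: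
  "0 \<le> q \<Longrightarrow> q \<le> 1 \<Longrightarrow> cond_rej \<alpha> n q = binomial_cdf n q (crit_count \<alpha> n)"
  unfolding cond_rej_def by (rule prob_binomial_le)

lemma mc_power_eq_integral_binomial_cdf:
  "mc_power M G act T X \<alpha> n = (\<integral>\<omega>. binomial_cdf n (exceed_prob G act T (X \<omega>)) (crit_count \<alpha> n) \<partial>M)"
  unfolding mc_power_def exceed_prob_def
  by (simp add: cond_rej_eq_binomial_cdf measure_pmf.prob_le_1)

lemma exceed_prob_pos:
  assumes "finite (carrier G)" "g \<in> carrier G" "T x \<le> T (act g x)"
  shows "0 < exceed_prob G act T x"
proof -
  have "carrier G \<noteq> {}" using assms(2) by blast
  then show ?thesis
    unfolding exceed_prob_def using assms by (intro measure_pmf_posI[of g]) auto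
qed

lemma exceed_prob_eq_card:
  assumes "finite (carrier G)" "carrier G \<noteq> {}"
  shows "exceed_prob G act T x = card (carrier G \<inter> {g. T x \<le> T (act g x)}) / card (carrier G)"
  unfolding exceed_prob_def using assms by (simp add: measure_pmf_of_set)

lemma borel_measurable_exceed_prob:
  assumes "finite (carrier G)" "carrier G \<noteq> {}"
    and act: "\<And>g. g \<in> carrier G \<Longrightarrow> act g \<in> S \<rightarrow>\<^sub>M S"
    and T[measurable]: "T \<in> borel_measurable S"
  shows "exceed_prob G act T \<in> borel_measurable S"
proof -
  have "(\<lambda>x. of_bool (T x \<le> T (act g x)) :: real) \<in> borel_measurable S" if "g \<in> carrier G" for g
  proof -
    have [measurable]: "(\<lambda>x. T (act g x)) \<in> borel_measurable S"
      using measurable_compose[OF act[OF that] T] .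
    show ?thesis by measurable
  qed
  then have "(\<lambda>x. (\<Sum>g\<in>carrier G. of_bool (T x \<le> T (act g x))) / real (card (carrier G)))
      \<in> borel_measurable S"
    by (intro borel_measurable_divide borel_measurable_sum) auto
  moreover have "exceed_prob G act T
      = (\<lambda>x. (\<Sum>g\<in>carrier G. of_bool (T x \<le> T (act g x))) / real (card (carrier G)))"
    using assms(1,2) by (simp add: fun_eq_iff exceed_prob_eq_card sum.If_cases)
  ultimately show ?thesis by simp
qed

lemma crit_count_less:
  assumes "\<alpha> < 1"
  shows "crit_count \<alpha> B < int B"
proof -
  from assms have "(real B + 1) * \<alpha> < real B + 1"
    by (simp add: mult_less_cancel_left1)
  then show ?thesis
    unfolding crit_count_def by linarith
qed

lemma crit_count_nonneg_at_integer:
  assumes "0 < \<alpha>" "(real B + 1) * \<alpha> \<in> \<int>"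
  shows "0 \<le> crit_count \<alpha> B"
proof -
  obtain m where m: "(real B + 1) * \<alpha> = of_int m"
    using assms(2) by (elim Ints_cases)
  moreover have "0 < (real B + 1) * \<alpha>"
    using assms(1) by simp
  ultimately show ?thesis
    unfolding crit_count_def by simp
qed

lemma crit_count_Suc_at_integer:
  assumes "0 \<le> \<alpha>" "\<alpha> < 1" "(real B + 1) * \<alpha> \<in> \<int>"
  shows "crit_count \<alpha> (Suc B) = crit_count \<alpha> B"
proof -
  obtain m where m: "(real B + 1) * \<alpha> = of_int m"
    using assms(3) by (elim Ints_cases)
  then have "(real (Suc B) + 1) * \<alpha> = of_int m + \<alpha>"
    by (simp add: algebra_simps)
  then show ?thesis
    unfolding crit_count_def m using assms(1,2) by (simp add: floor_unique)
qed

lemma crit_count_pred_at_integer: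
  assumes "0 < \<alpha>" "\<alpha> \<le> 1" "(real (Suc B) + 1) * \<alpha> \<in> \<int>"
  shows "crit_count \<alpha> B = crit_count \<alpha> (Suc B) - 1"
proof -
  obtain m where m: "(real (Suc B) + 1) * \<alpha> = of_int m"
    using assms(3) by (elim Ints_cases)
  then have "(real B + 1) * \<alpha> = of_int m - \<alpha>"
    by (simp add: algebra_simps)
  moreover have "\<lfloor>of_int m - \<alpha>\<rfloor> = m - 1"
    using assms(1,2) by (intro floor_unique) auto
  ultimately show ?thesis
    unfolding crit_count_def m by simp
qed

theorem mainTheorem7:
  fixes M :: "'w measure" and S :: "'x measure" and G :: "('g, 'b) monoid_scheme"
    and act :: "'g \<Rightarrow> 'x \<Rightarrow> 'x" and T :: "'x \<Rightarrow> real" and X :: "'w \<Rightarrow> 'x"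
    and \<alpha> :: real and B :: nat
  assumes "prob_space M"
    and "group G" and "finite (carrier G)"
    and "\<And>x. act \<one>\<^bsub>G\<^esub> x = x"
    and "\<And>g h x. g \<in> carrier G \<Longrightarrow> h \<in> carrier G \<Longrightarrow> act (g \<otimes>\<^bsub>G\<^esub> h) x = act g (act h x)"
    and "\<And>g. g \<in> carrier G \<Longrightarrow> act g \<in> S \<rightarrow>\<^sub>M S"
    and "T \<in> borel_measurable S"
    and "X \<in> M \<rightarrow>\<^sub>M S"
    and "0 < \<alpha>" and "\<alpha> < 1"
    and "measure M {\<omega> \<in> space M. exceed_prob G act T (X \<omega>) < 1} > 0"
    and "B \<ge> 2"
    and "(real B + 1) * \<alpha> \<in> \<nat>"
  shows "crit_count \<alpha> B - crit_count \<alpha> (B - 1) = 1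
       \<and> crit_count \<alpha> (B + 1) - crit_count \<alpha> B = 0
       \<and> mc_power M G act T X \<alpha> (B - 1) < mc_power M G act T X \<alpha> B
       \<and> mc_power M G act T X \<alpha> (B + 1) < mc_power M G act T X \<alpha> B"
proof -
  interpret prob_space M by fact
  obtain n where B: "B = Suc n" using \<open>B \<ge> 2\<close> by (cases B) auto
  have integer: "(real (Suc n) + 1) * \<alpha> \<in> \<int>"
    using \<open>(real B + 1) * \<alpha> \<in> \<nat>\<close> Nats_subset_Ints B by blast
  define k where "k = nat (crit_count \<alpha> B)"
  have crit: "crit_count \<alpha> B = int k" "crit_count \<alpha> (B - 1) = int k - 1"
    "crit_count \<alpha> (B + 1) = int k"
    using crit_count_nonneg_at_integer crit_count_pred_at_integer crit_count_Suc_at_integer integer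
      assms(9,10) unfolding k_def B by auto
  have "k \<le> n" using crit_count_less[OF \<open>\<alpha> < 1\<close>, of B] crit(1) B by simp
  define Q where "Q \<omega> = exceed_prob G act T (X \<omega>)" for \<omega>
  have "\<one>\<^bsub>G\<^esub> \<in> carrier G" using \<open>group G\<close> by (simp add: group.is_monoid monoid.one_closed)
  then have Q_range: "Q \<omega> \<in> {0<..1}" for \<omega>
    using exceed_prob_pos[OF \<open>finite (carrier G)\<close>, of "\<one>\<^bsub>G\<^esub>" T "X \<omega>" act] assms(4)
    unfolding Q_def by (simp add: exceed_prob_def measure_pmf.prob_le_1)
  have Q_measurable: "Q \<in> borel_measurable M"
    unfolding Q_def using \<open>\<one>\<^bsub>G\<^esub> \<in> carrier G\<close>
    by (intro measurable_compose[OF assms(8)] borel_measurable_exceed_prob[OF assms(3) _ assms(6,7)]) auto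
  have nondegenerate: "emeasure M {\<omega> \<in> space M. Q \<omega> < 1} \<noteq> 0"
    using assms(11) by (auto simp: Q_def measure_def)
  note less = integral_binomial_cdf_less[OF Q_measurable Q_range nondegenerate]
  have power: "mc_power M G act T X \<alpha> m = (\<integral>\<omega>. binomial_cdf m (Q \<omega>) (crit_count \<alpha> m) \<partial>M)" for m
    unfolding Q_def by (rule mc_power_eq_integral_binomial_cdf)
  have "mc_power M G act T X \<alpha> (B - 1) < mc_power M G act T X \<alpha> B"
    unfolding power crit using \<open>k \<le> n\<close>
    by (intro less) (auto simp: B binomial_cdf_Suc_trials_count binomial_term_nonneg binomial_term_pos)
  moreover have "mc_power M G act T X \<alpha> (B + 1) < mc_power M G act T X \<alpha> B"
    unfolding power crit using \<open>k \<le> n\<close>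
    by (intro less) (auto simp: B binomial_cdf_Suc_trials binomial_term_nonneg binomial_term_pos)
  ultimately show ?thesis using crit by simp
qed

end
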